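(* The class of halfspaces over $\mathbb{R}^2$ has a lossless compression scheme of size $5$ with respect to the comparison oracle (together with label queries), with the trivial inference rule.
   Context: A halfspace over $\mathbb{R}^2$ is $x\mapsto\mathrm{sign}(h(x))$ with $h(x)=\langle v,x\rangle+b$, $v\in S^1$, $b\in\mathbb{R}$ (label $1$ iff $h(x)\ge0$). A label query on $x$ returns its label; a comparison query on $x,x'$ returns whether $\langle x,v\rangle\ge\langle x',v\rangle$ (equivalently $h(x)\ge h(x')$). For $S\subseteq\mathbb{R}^2$, $Q_h(S)$ is the set of all combinations of valid responses to label and comparison queries on $S$, and $q(S)|_W$ its restriction to $W\subseteq S$. The label of $x$ is inferred by $q(S)$ if all halfspaces consistent with $q(S)$ give $x$ the same label; $I(q(S))$ is the set of such points. A lossless compression scheme of size $k$: for every halfspace $h$, every $S$ on which $h$'s label is constant, and every $q(S)\in Q_h(S)$, there is $W\subseteq S$ with $|W|\le k$ and $I(q(S))=I(q(S)|_W)$. *)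

theory Defs
  imports "HOL-Analysis.Analysis"
begin

type_synonym pt = "real^2"

definition is_halfspace :: "pt \<times> real \<Rightarrow> bool" where
  "is_halfspace h \<longleftrightarrow> norm (fst h) = 1"

definition hval :: "pt \<times> real \<Rightarrow> pt \<Rightarrow> real" where
  "hval h x = fst h \<bullet> x + snd h"

definition hlabel :: "pt \<times> real \<Rightarrow> pt \<Rightarrow> bool" where
  "hlabel h x \<longleftrightarrow> hval h x \<ge> 0"

definition hcmp :: "pt \<times> real \<Rightarrow> pt \<Rightarrow> pt \<Rightarrow> bool" where
  "hcmp h x x' \<longleftrightarrow> fst h \<bullet> x \<ge> fst h \<bullet> x'"

text \<open>A combination of responses: answers to label queries and to comparison queries.\<close>
type_synonym response = "(pt \<Rightarrow> bool) \<times> (pt \<Rightarrow> pt \<Rightarrow> bool)"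

text \<open>Q_h(S): all combinations of valid responses of h to label and comparison queries on S
  (only the answers on S, resp. S x S, are constrained).\<close>
definition Qh :: "pt \<times> real \<Rightarrow> pt set \<Rightarrow> response set" where
  "Qh h S = {(l, c). (\<forall>x\<in>S. l x = hlabel h x) \<and> (\<forall>x\<in>S. \<forall>x'\<in>S. c x x' = hcmp h x x')}"

text \<open>A halfspace h' is consistent with the responses q to the queries on W
  (so q restricted to W is represented by the pair W, q).\<close>
definition consistent :: "pt set \<Rightarrow> response \<Rightarrow> pt \<times> real \<Rightarrow> bool" where
  "consistent W q h' \<longleftrightarrow> is_halfspace h' \<and> q \<in> Qh h' W"

definition inferred :: "pt set \<Rightarrow> response \<Rightarrow> pt set" where
  "inferred W q = {x. \<forall>h1 h2. consistent W q h1 \<longrightarrow> consistent W q h2 \<longrightarrow>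
                        hlabel h1 x = hlabel h2 x}"

definition lossless_compression_scheme :: "nat \<Rightarrow> bool" where
  "lossless_compression_scheme k \<longleftrightarrow>
     (\<forall>h S q. is_halfspace h \<longrightarrow> finite S \<longrightarrow>
        (\<forall>x\<in>S. \<forall>y\<in>S. hlabel h x = hlabel h y) \<longrightarrow> q \<in> Qh h S \<longrightarrow>
        (\<exists>W \<subseteq> S. card W \<le> k \<and> inferred S q = inferred W q))"

end

theory Submission
  imports Defs
begin

(* The comparison answers on S are forced by those on at most four of its points, and the labels
   by one more point. If two distinct points of S tie under v, every w reproducing the tie is
   parallel to v, and one strict pair fixes its orientation. Otherwise give each strict pair
   x <_v y the slope of y - x in the frame formed by v and v turned by a right angle: the sign of
   w \<bullet> (y - x) is that of an affine function of this slope, so the two pairs of extremal slope force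
   every comparison. As for labels, S lies on one side of the boundary, so the point of S nearest
   to it has the common label, and the comparisons with that point pass the label on to all of S. *)

lemma finite_arg_minE:
  fixes f :: "'a \<Rightarrow> 'b::linorder"
  assumes "finite S" "S \<noteq> {}"
  obtains x where "x \<in> S" "\<And>y. y \<in> S \<Longrightarrow> f x \<le> f y"
  using ex_is_arg_min_if_finite[OF assms, of f] unfolding is_arg_min_def
  by (auto simp: not_less)

lemma affine_pos_between:
  fixes a b r s t :: real
  assumes "0 < a + b * s" "0 < a + b * t" "s \<le> r" "r \<le> t"
  shows "0 < a + b * r"
proof (cases "0 \<le> b")
  case True
  then have "b * s \<le> b * r" using assms(3) by (simp add: mult_left_mono)
  then show ?thesis using assms(1) by linarith
next
  case False
  then have "b * t \<le> b * r" using assms(4) by (simp add: mult_left_mono_neg)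
  then show ?thesis using assms(2) by linarith
qed

definition same_order_on :: "'a::real_inner set \<Rightarrow> 'a \<Rightarrow> 'a \<Rightarrow> bool" where
  "same_order_on S v w \<longleftrightarrow> (\<forall>x\<in>S. \<forall>y\<in>S. v \<bullet> x \<le> v \<bullet> y \<longleftrightarrow> w \<bullet> x \<le> w \<bullet> y)"

definition order_determining :: "'a::real_inner set \<Rightarrow> 'a set \<Rightarrow> 'a \<Rightarrow> bool" where
  "order_determining P S v \<longleftrightarrow> P \<subseteq> S \<and> (\<forall>w. same_order_on P v w \<longrightarrow> same_order_on S v w)"

lemma same_order_on_iff:
  "same_order_on S v w \<longleftrightarrow>
     (\<forall>x\<in>S. \<forall>y\<in>S. (v \<bullet> x < v \<bullet> y \<longrightarrow> w \<bullet> x < w \<bullet> y) \<and> (v \<bullet> x = v \<bullet> y \<longrightarrow> w \<bullet> x = w \<bullet> y))"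
    (is "_ \<longleftrightarrow> ?strict_and_ties")
proof
  assume "same_order_on S v w"
  then have order: "v \<bullet> x \<le> v \<bullet> y \<longleftrightarrow> w \<bullet> x \<le> w \<bullet> y" if "x \<in> S" "y \<in> S" for x y
    using that by (simp add: same_order_on_def)
  show ?strict_and_ties
  proof (intro ballI conjI impI)
    fix x y
    assume "x \<in> S" "y \<in> S"
    show "w \<bullet> x < w \<bullet> y" if "v \<bullet> x < v \<bullet> y"
      using order[OF \<open>y \<in> S\<close> \<open>x \<in> S\<close>] that by auto
    show "w \<bullet> x = w \<bullet> y" if "v \<bullet> x = v \<bullet> y"
      using order[OF \<open>x \<in> S\<close> \<open>y \<in> S\<close>] order[OF \<open>y \<in> S\<close> \<open>x \<in> S\<close>] that by auto
  qed
next
  assume strict_and_ties: ?strict_and_ties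
  have "v \<bullet> x \<le> v \<bullet> y \<longleftrightarrow> w \<bullet> x \<le> w \<bullet> y" if "x \<in> S" "y \<in> S" for x y
  proof -
    have "v \<bullet> x < v \<bullet> y \<longrightarrow> w \<bullet> x < w \<bullet> y" "v \<bullet> y < v \<bullet> x \<longrightarrow> w \<bullet> y < w \<bullet> x"
      "v \<bullet> x = v \<bullet> y \<longrightarrow> w \<bullet> x = w \<bullet> y"
      using strict_and_ties that by blast+
    then show ?thesis
      by (cases rule: linorder_cases[of "v \<bullet> x" "v \<bullet> y"]) auto
  qed
  then show "same_order_on S v w"
    by (simp add: same_order_on_def)
qed

definition cross2 :: "real^2 \<Rightarrow> real^2 \<Rightarrow> real" where
  "cross2 v x = v$1 * x$2 - v$2 * x$1"

definition slope :: "real^2 \<Rightarrow> real^2 \<Rightarrow> real^2 \<Rightarrow> real" where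
  "slope v x y = cross2 v (y - x) / (v \<bullet> (y - x))"

lemma inner_real2: "x \<bullet> y = x$1 * y$1 + x$2 * y$2" for x y :: "real^2"
  by (simp add: inner_vec_def sum_2)

lemma lagrange_identity_real2:
  "(v \<bullet> v) * (w \<bullet> x) = (v \<bullet> w) * (v \<bullet> x) + cross2 v w * cross2 v x"
  by (simp add: inner_real2 cross2_def algebra_simps)

lemma cross2_eq_0_if_orthogonal:
  fixes v w d :: "real^2"
  assumes "v \<noteq> 0" "d \<noteq> 0" "v \<bullet> d = 0" "w \<bullet> d = 0"
  shows "cross2 v w = 0"
proof -
  have "(v \<bullet> v) * (d \<bullet> d) = cross2 v d * cross2 v d"
    using lagrange_identity_real2[of v d d] assms(3) by simp
  moreover have "0 < (v \<bullet> v) * (d \<bullet> d)"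
    using assms(1,2) by simp
  ultimately have "cross2 v d \<noteq> 0"
    by auto
  moreover have "cross2 v w * cross2 v d = 0"
    using lagrange_identity_real2[of v w d] assms(3,4) by simp
  ultimately show ?thesis
    by simp
qed

lemma parallel_inner_diff:
  assumes "cross2 v w = 0"
  shows "(v \<bullet> v) * (w \<bullet> y - w \<bullet> x) = (v \<bullet> w) * (v \<bullet> y - v \<bullet> x)"
  using lagrange_identity_real2[of v w "y - x"] assms
  by (simp add: inner_diff_right)

lemma same_order_on_if_parallel:
  fixes v w :: "real^2"
  assumes "v \<noteq> 0" "cross2 v w = 0" "v \<bullet> x1 < v \<bullet> y1" "w \<bullet> x1 < w \<bullet> y1"
  shows "same_order_on S v w"
proof -
  have vv: "0 < v \<bullet> v"
    using assms(1) by simp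
  have "0 < (v \<bullet> w) * (v \<bullet> y1 - v \<bullet> x1)"
    using parallel_inner_diff[OF assms(2), of y1 x1] vv assms(4)
    by (metis diff_gt_0_iff_gt mult_pos_pos)
  then have vw: "0 < v \<bullet> w"
    using assms(3) by (simp add: zero_less_mult_iff)
  have "w \<bullet> x < w \<bullet> y" if "v \<bullet> x < v \<bullet> y" for x y
  proof -
    have "0 < (v \<bullet> v) * (w \<bullet> y - w \<bullet> x)"
      using parallel_inner_diff[OF assms(2), of y x] vw that by simp
    then show ?thesis
      using vv by (simp add: zero_less_mult_iff)
  qed
  moreover have "w \<bullet> x = w \<bullet> y" if "v \<bullet> x = v \<bullet> y" for x y
    using parallel_inner_diff[OF assms(2), of y x] vv that by simp
  ultimately show ?thesis
    unfolding same_order_on_iff by blast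
qed

lemma same_order_on_if_parallel_const:
  fixes v w :: "real^2"
  assumes "v \<noteq> 0" "cross2 v w = 0" "\<And>x y. x \<in> S \<Longrightarrow> y \<in> S \<Longrightarrow> v \<bullet> x = v \<bullet> y"
  shows "same_order_on S v w"
proof -
  have "v \<bullet> x \<le> v \<bullet> y \<longleftrightarrow> w \<bullet> x \<le> w \<bullet> y" if "x \<in> S" "y \<in> S" for x y
  proof -
    have "v \<bullet> x = v \<bullet> y"
      using assms(3) that .
    moreover from this have "w \<bullet> x = w \<bullet> y"
      using parallel_inner_diff[OF assms(2), of y x] assms(1) by simp
    ultimately show ?thesis
      by simp
  qed
  then show ?thesis
    by (simp add: same_order_on_def)
qed

lemma inner_less_iff_slope:
  fixes v w x y :: "real^2"
  assumes "v \<noteq> 0" "v \<bullet> x < v \<bullet> y"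
  shows "w \<bullet> x < w \<bullet> y \<longleftrightarrow> 0 < v \<bullet> w + cross2 v w * slope v x y"
proof -
  have vv: "0 < v \<bullet> v"
    using assms(1) by simp
  have d: "0 < v \<bullet> (y - x)"
    using assms(2) by (simp add: inner_diff_right)
  have "(v \<bullet> v) * (w \<bullet> (y - x)) = (v \<bullet> (y - x)) * (v \<bullet> w + cross2 v w * slope v x y)"
    using lagrange_identity_real2[of v w "y - x"] d by (simp add: slope_def field_simps)
  then have "0 < w \<bullet> (y - x) \<longleftrightarrow> 0 < v \<bullet> w + cross2 v w * slope v x y"
    using vv d by (metis zero_less_mult_iff order.asym)
  then show ?thesis
    by (simp add: inner_diff_right)
qed

lemma order_determining_if_tie:
  fixes v :: "real^2"
  assumes "v \<noteq> 0" and x0: "x0 \<in> S" "x0' \<in> S" "x0 \<noteq> x0'" "v \<bullet> x0 = v \<bullet> x0'"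
  shows "\<exists>P. order_determining P S v \<and> card P \<le> 4"
proof -
  have parallel: "cross2 v w = 0" if "same_order_on T v w" "{x0, x0'} \<subseteq> T" for T w
  proof -
    have "w \<bullet> x0 = w \<bullet> x0'"
      using that x0(4) unfolding same_order_on_iff by blast
    then show ?thesis
      using cross2_eq_0_if_orthogonal[OF assms(1), of "x0 - x0'" w] x0(3,4)
      by (simp add: inner_diff_right)
  qed
  show ?thesis
  proof (cases "\<exists>x1\<in>S. \<exists>y1\<in>S. v \<bullet> x1 < v \<bullet> y1")
    case True
    then obtain x1 y1 where xy: "x1 \<in> S" "y1 \<in> S" "v \<bullet> x1 < v \<bullet> y1"
      by blast
    have "order_determining {x0, x0', x1, y1} S v"
      unfolding order_determining_def
    proof (intro conjI allI impI)
      show "{x0, x0', x1, y1} \<subseteq> S"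
        using x0 xy by simp
      fix w
      assume same: "same_order_on {x0, x0', x1, y1} v w"
      then have "cross2 v w = 0"
        by (rule parallel) simp
      moreover have "w \<bullet> x1 < w \<bullet> y1"
        using same xy(3) unfolding same_order_on_iff by blast
      ultimately show "same_order_on S v w"
        using same_order_on_if_parallel[OF assms(1) _ xy(3)] by blast
    qed
    moreover have "card {x0, x0', x1, y1} \<le> 4"
      using card_length[of "[x0, x0', x1, y1]"] by simp
    ultimately show ?thesis
      by blast
  next
    case False
    then have "v \<bullet> x = v \<bullet> y" if "x \<in> S" "y \<in> S" for x y
      using that by (meson linorder_neqE)
    then have "order_determining {x0, x0'} S v"
      using parallel same_order_on_if_parallel_const[OF assms(1)] x0(1,2)
      unfolding order_determining_def by blast
    moreover have "card {x0, x0'} \<le> 4"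
      using card_length[of "[x0, x0']"] by simp
    ultimately show ?thesis
      by blast
  qed
qed

lemma same_order_on_if_extremal_slopes:
  fixes v w x1 y1 x2 y2 :: "real^2"
  assumes "v \<noteq> 0" "inj_on ((\<bullet>) v) S"
    and extremal: "\<And>x y. x \<in> S \<Longrightarrow> y \<in> S \<Longrightarrow> v \<bullet> x < v \<bullet> y \<Longrightarrow>
                      slope v x2 y2 \<le> slope v x y \<and> slope v x y \<le> slope v x1 y1"
    and "v \<bullet> x1 < v \<bullet> y1" "w \<bullet> x1 < w \<bullet> y1"
    and "v \<bullet> x2 < v \<bullet> y2" "w \<bullet> x2 < w \<bullet> y2"
  shows "same_order_on S v w"
proof -
  have "0 < v \<bullet> w + cross2 v w * slope v x2 y2" "0 < v \<bullet> w + cross2 v w * slope v x1 y1"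
    using inner_less_iff_slope[OF assms(1)] assms(4-7) by blast+
  then have "w \<bullet> x < w \<bullet> y" if "x \<in> S" "y \<in> S" "v \<bullet> x < v \<bullet> y" for x y
    using affine_pos_between extremal[OF that] inner_less_iff_slope[OF assms(1) that(3)] by blast
  moreover have "x = y" if "x \<in> S" "y \<in> S" "v \<bullet> x = v \<bullet> y" for x y
    using assms(2) that by (auto dest: inj_onD)
  ultimately show ?thesis
    unfolding same_order_on_iff by blast
qed

lemma order_determining_if_inj:
  fixes v :: "real^2"
  assumes "v \<noteq> 0" "finite S" "inj_on ((\<bullet>) v) S"
  shows "\<exists>P. order_determining P S v \<and> card P \<le> 4"
proof -
  define D where "D = {(x, y) \<in> S \<times> S. v \<bullet> x < v \<bullet> y}"
  show ?thesis
  proof (cases "D = {}")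
    case True
    have "v \<bullet> x \<le> v \<bullet> y \<longleftrightarrow> w \<bullet> x \<le> w \<bullet> y" if "x \<in> S" "y \<in> S" for x y w
    proof -
      have "x = y"
        using True assms(3) that unfolding D_def
        by (cases rule: linorder_cases[of "v \<bullet> x" "v \<bullet> y"]) (auto dest: inj_onD)
      then show ?thesis
        by simp
    qed
    then have "order_determining {} S v"
      unfolding order_determining_def same_order_on_def by blast
    then show ?thesis
      by force
  next
    case False
    define s where "s p = slope v (fst p) (snd p)" for p
    have "D \<subseteq> S \<times> S"
      by (auto simp: D_def)
    then have "finite D"
      using assms(2) finite_subset by blast
    obtain p1 where p1: "p1 \<in> D" "\<And>p. p \<in> D \<Longrightarrow> s p \<le> s p1"
      using finite_arg_minE[OF \<open>finite D\<close> False, of "\<lambda>p. - s p"] by (metis neg_le_iff_le)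
    obtain p2 where p2: "p2 \<in> D" "\<And>p. p \<in> D \<Longrightarrow> s p2 \<le> s p"
      using finite_arg_minE[OF \<open>finite D\<close> False, of s] by blast
    obtain x1 y1 x2 y2 where pairs: "p1 = (x1, y1)" "p2 = (x2, y2)"
      by fastforce
    have "order_determining {x1, y1, x2, y2} S v"
      unfolding order_determining_def
    proof (intro conjI allI impI)
      show "{x1, y1, x2, y2} \<subseteq> S"
        using p1(1) p2(1) pairs by (simp add: D_def)
      fix w
      assume "same_order_on {x1, y1, x2, y2} v w"
      moreover have "v \<bullet> x1 < v \<bullet> y1" "v \<bullet> x2 < v \<bullet> y2"
        using p1(1) p2(1) pairs by (simp_all add: D_def)
      ultimately have "w \<bullet> x1 < w \<bullet> y1" "w \<bullet> x2 < w \<bullet> y2"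
        unfolding same_order_on_iff by blast+
      moreover have "slope v x2 y2 \<le> slope v x y \<and> slope v x y \<le> slope v x1 y1"
        if "x \<in> S" "y \<in> S" "v \<bullet> x < v \<bullet> y" for x y
        using p1(2)[of "(x, y)"] p2(2)[of "(x, y)"] pairs that by (simp add: D_def s_def)
      ultimately show "same_order_on S v w"
        using same_order_on_if_extremal_slopes[OF assms(1,3)] \<open>v \<bullet> x1 < v \<bullet> y1\<close>
          \<open>v \<bullet> x2 < v \<bullet> y2\<close> by blast
    qed
    moreover have "card {x1, y1, x2, y2} \<le> 4"
      using card_length[of "[x1, y1, x2, y2]"] by simp
    ultimately show ?thesis
      by blast
  qed
qed

lemma order_determining_real2:
  fixes v :: "real^2"
  assumes "v \<noteq> 0" "finite S"
  shows "\<exists>P. order_determining P S v \<and> card P \<le> 4"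
proof (cases "inj_on ((\<bullet>) v) S")
  case True
  then show ?thesis
    using order_determining_if_inj assms by blast
next
  case False
  then obtain x0 x0' where "x0 \<in> S" "x0' \<in> S" "x0 \<noteq> x0'" "v \<bullet> x0 = v \<bullet> x0'"
    by (auto simp: inj_on_def)
  then show ?thesis
    using order_determining_if_tie assms(1) by blast
qed

lemma hcmp_iff_hval: "hcmp h x y \<longleftrightarrow> hval h y \<le> hval h x"
  by (simp add: hcmp_def hval_def)

lemma hlabel_if_hcmp: "hcmp h x y \<Longrightarrow> hlabel h y \<Longrightarrow> hlabel h x"
  by (simp add: hcmp_iff_hval hlabel_def)

lemma same_order_on_iff_hcmp:
  "same_order_on S (fst h) (fst h') \<longleftrightarrow> (\<forall>x\<in>S. \<forall>y\<in>S. hcmp h x y = hcmp h' x y)"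
  unfolding same_order_on_def hcmp_def by blast

lemma consistent_subset: "W \<subseteq> S \<Longrightarrow> consistent S q h \<Longrightarrow> consistent W q h"
  by (auto simp: consistent_def Qh_def)

lemma hlabel_eq_if_nearest_boundary:
  assumes const: "\<forall>x\<in>S. \<forall>y\<in>S. hlabel h x = hlabel h y"
    and m: "m \<in> S" "\<And>x. x \<in> S \<Longrightarrow> \<bar>hval h m\<bar> \<le> \<bar>hval h x\<bar>"
    and same: "same_order_on S (fst h) (fst h')"
    and label_m: "hlabel h' m = hlabel h m"
    and x: "x \<in> S"
  shows "hlabel h' x = hlabel h x"
proof (cases "hlabel h m")
  case True
  then have "hlabel h x"
    using const m(1) x by blast
  then have "hval h m \<le> hval h x"
    using True m(2)[OF x] by (simp add: hlabel_def)
  then have "hcmp h' x m"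
    using same m(1) x by (simp add: hcmp_iff_hval same_order_on_iff_hcmp)
  then show ?thesis
    using hlabel_if_hcmp[of h' x m] True label_m \<open>hlabel h x\<close> by blast
next
  case False
  then have "\<not> hlabel h x"
    using const m(1) x by blast
  then have "hval h x \<le> hval h m"
    using False m(2)[OF x] by (simp add: hlabel_def)
  then have "hcmp h' m x"
    using same m(1) x by (simp add: hcmp_iff_hval same_order_on_iff_hcmp)
  then show ?thesis
    using hlabel_if_hcmp[of h' m x] False label_m \<open>\<not> hlabel h x\<close> by blast
qed

lemma consistent_insert_nearest_iff:
  assumes q: "q \<in> Qh h S"
    and const: "\<forall>x\<in>S. \<forall>y\<in>S. hlabel h x = hlabel h y"
    and P: "order_determining P S (fst h)"
    and m: "m \<in> S" "\<And>x. x \<in> S \<Longrightarrow> \<bar>hval h m\<bar> \<le> \<bar>hval h x\<bar>"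
  shows "consistent (insert m P) q h' \<longleftrightarrow> consistent S q h'"
proof
  assume "consistent S q h'"
  then show "consistent (insert m P) q h'"
    using P m(1) by (auto intro: consistent_subset simp: order_determining_def)
next
  assume W: "consistent (insert m P) q h'"
  obtain l c where lc: "q = (l, c)"
    by fastforce
  have hS: "\<forall>x\<in>S. l x = hlabel h x" "\<forall>x\<in>S. \<forall>y\<in>S. c x y = hcmp h x y"
    using q lc by (auto simp: Qh_def)
  have hW: "is_halfspace h'" "\<forall>x\<in>insert m P. l x = hlabel h' x"
    "\<forall>x\<in>insert m P. \<forall>y\<in>insert m P. c x y = hcmp h' x y"
    using W lc by (auto simp: consistent_def Qh_def)
  have "P \<subseteq> S"
    using P by (simp add: order_determining_def)
  then have "hcmp h x y = hcmp h' x y" if "x \<in> P" "y \<in> P" for x y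
  proof -
    have "c x y = hcmp h x y"
      using hS(2) \<open>P \<subseteq> S\<close> that by blast
    moreover have "c x y = hcmp h' x y"
      using hW(3) that by blast
    ultimately show ?thesis
      by simp
  qed
  then have "same_order_on P (fst h) (fst h')"
    by (simp add: same_order_on_iff_hcmp)
  then have same: "same_order_on S (fst h) (fst h')"
    using P by (simp add: order_determining_def)
  have "hlabel h' m = hlabel h m"
    using hS(1) hW(2) m(1) by simp
  then have "\<forall>x\<in>S. l x = hlabel h' x"
    using hlabel_eq_if_nearest_boundary[OF const m same] hS(1) by simp
  moreover have "\<forall>x\<in>S. \<forall>y\<in>S. c x y = hcmp h' x y"
    using hS(2) same by (simp add: same_order_on_iff_hcmp)
  ultimately show "consistent S q h'"
    using hW(1) lc by (simp add: consistent_def Qh_def)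
qed

theorem proposition4p6:
  shows "lossless_compression_scheme 5"
  unfolding lossless_compression_scheme_def
proof (intro allI impI)
  fix h S q
  assume h: "is_halfspace h" and S: "finite S"
    and const: "\<forall>x\<in>S. \<forall>y\<in>S. hlabel h x = hlabel h y" and q: "q \<in> Qh h S"
  show "\<exists>W\<subseteq>S. card W \<le> 5 \<and> inferred S q = inferred W q"
  proof (cases "S = {}")
    case True
    then show ?thesis
      by auto
  next
    case False
    obtain m where m: "m \<in> S" "\<And>x. x \<in> S \<Longrightarrow> \<bar>hval h m\<bar> \<le> \<bar>hval h x\<bar>"
      using finite_arg_minE[OF S False, of "\<lambda>x. \<bar>hval h x\<bar>"] by blast
    have "fst h \<noteq> 0"
      using h by (auto simp: is_halfspace_def)
    then obtain P where P: "order_determining P S (fst h)" "card P \<le> 4"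
      using order_determining_real2 S by blast
    have "inferred S q = inferred (insert m P) q"
      using consistent_insert_nearest_iff[OF q const P(1) m] by (simp add: inferred_def)
    moreover have "insert m P \<subseteq> S"
      using P(1) m(1) by (simp add: order_determining_def)
    moreover have "card (insert m P) \<le> 5"
      using P(2) by (simp add: card_insert_le_m1)
    ultimately show ?thesis
      by blast
  qed
qed

end
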